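(* In the setting of the noncommutative space $\mathbb{R}^4_\theta$ described in the context, the element $g=\sum_{i,j=1}^4g_{ij}\,\mathrm{d}z^i\otimes_A\mathrm{d}z^j\in\Omega^1_A\otimes_A\Omega^1_A$ defines a (generalized) metric on $\Omega^1_A$ (i.e. it is central and determines an $A$-bimodule map $g:A\to\Omega^1_A\otimes_A\Omega^1_A$, $a\mapsto a\,g$), whose inverse metric is the map $g^{-1}:\Omega^1_A\otimes_A\Omega^1_A\to A$ determined by $g^{-1}(\mathrm{d}z^i\otimes_A\mathrm{d}z^j)=g^{ij}$.
   Context: Let $\theta\in\mathbb{R}$ and $R=(R^{ab})$ the $4\times4$ matrix (row $a$, column $b$) with rows $(1,e^{-i\theta},1,e^{i\theta})$, $(e^{i\theta},1,e^{-i\theta},1)$, $(1,e^{i\theta},1,e^{-i\theta})$, $(e^{-i\theta},1,e^{i\theta},1)$. Let $A=\mathbb{C}\langle z^1,z^2,z^3,z^4\rangle/(z^iz^j-R^{ji}z^jz^i)$. Let $\Omega^1_A=\bigoplus_{i=1}^4A\,\mathrm{d}z^i$ be the free left $A$-module with right $A$-action determined by $\mathrm{d}z^i\,z^j=R^{ji}z^j\,\mathrm{d}z^i$, and $\mathrm{d}:A\to\Omega^1_A$ the map with $z^i\mapsto\mathrm{d}z^i$ extended by the Leibniz rule. Let $P$ be the $4\times4$ matrix with rows $(0,0,1,0),(0,0,0,1),(1,0,0,0),(0,1,0,0)$, $(g_{ij})=\tfrac12P$ and $(g^{ij})=2P$; $g^{-1}$ is extended left $A$-linearly using the left basis $\{\mathrm{d}z^i\otimes_A\mathrm{d}z^j\}$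 of $\Omega^1_A\otimes_A\Omega^1_A$. A (generalized) metric is an $A$-bimodule map $g:A\to\Omega^1_A\otimes_A\Omega^1_A$, $g(1)=\sum_\alpha g^\alpha\otimes_Ag_\alpha$, for which there is an $A$-bimodule map $g^{-1}:\Omega^1_A\otimes_A\Omega^1_A\to A$ with $\sum_\alpha g^{-1}(\omega\otimes_Ag^\alpha)g_\alpha=\omega=\sum_\alpha g^\alpha g^{-1}(g_\alpha\otimes_A\omega)$ for all $\omega\in\Omega^1_A$. *)

theory Defs
  imports Complex_Main "HOL-Library.Function_Algebras"
begin

text \<open>Elements of the free algebra are coefficient functions on words (lists of
letters); the letter i stands for the generator z^i.  Addition is pointwise
(Function_Algebras); multiplication is concatenation-convolution.\<close>

type_synonym fa = "nat list \<Rightarrow> complex"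

definition fa_carrier :: "fa set" where
  "fa_carrier = {a. finite {w. a w \<noteq> 0} \<and> (\<forall>w. a w \<noteq> 0 \<longrightarrow> set w \<subseteq> {1..4})}"

definition fa_mult :: "fa \<Rightarrow> fa \<Rightarrow> fa" (infixl "\<star>" 70) where
  "a \<star> b = (\<lambda>w. \<Sum>k\<le>length w. a (take k w) * b (drop k w))"

definition fa_scal :: "complex \<Rightarrow> fa \<Rightarrow> fa" where
  "fa_scal c a = (\<lambda>w. c * a w)"

definition fa_const :: "complex \<Rightarrow> fa" where
  "fa_const c = (\<lambda>w. if w = [] then c else 0)"

definition fa_gen :: "nat \<Rightarrow> fa" where
  "fa_gen i = (\<lambda>w. if w = [i] then 1 else 0)"

definition Rmat :: "real \<Rightarrow> nat \<Rightarrow> nat \<Rightarrow> complex" where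
  "Rmat \<theta> a b = (if a \<in> {1..4} \<and> b \<in> {1..4} then
     [[1, cis (-\<theta>), 1, cis \<theta>],
      [cis \<theta>, 1, cis (-\<theta>), 1],
      [1, cis \<theta>, 1, cis (-\<theta>)],
      [cis (-\<theta>), 1, cis \<theta>, 1]] ! (a - 1) ! (b - 1) else 0)"

definition rel :: "real \<Rightarrow> nat \<Rightarrow> nat \<Rightarrow> fa" where
  "rel \<theta> i j = fa_gen i \<star> fa_gen j - fa_scal (Rmat \<theta> j i) (fa_gen j \<star> fa_gen i)"

inductive_set fa_ideal :: "real \<Rightarrow> fa set" for \<theta> :: real where
  zero: "0 \<in> fa_ideal \<theta>"
| gen: "\<lbrakk>i \<in> {1..4}; j \<in> {1..4}; u \<in> fa_carrier; v \<in> fa_carrier\<rbrakk>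
          \<Longrightarrow> u \<star> rel \<theta> i j \<star> v \<in> fa_ideal \<theta>"
| add: "\<lbrakk>x \<in> fa_ideal \<theta>; y \<in> fa_ideal \<theta>\<rbrakk> \<Longrightarrow> x + y \<in> fa_ideal \<theta>"

definition A_eq :: "real \<Rightarrow> fa \<Rightarrow> fa \<Rightarrow> bool" where
  "A_eq \<theta> a b \<longleftrightarrow> a - b \<in> fa_ideal \<theta>"

text \<open>The automorphism sigma_i with dz^i a = sigma_i(a) dz^i, determined by
dz^i z^j = R^{ji} z^j dz^i.\<close>
definition sigma :: "real \<Rightarrow> nat \<Rightarrow> fa \<Rightarrow> fa" where
  "sigma \<theta> i a = (\<lambda>w. prod_list (map (\<lambda>l. Rmat \<theta> l i) w) * a w)"

text \<open>Omega^1_A: free left A-module with basis dz^1..dz^4; an element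
sum_k w_k dz^k is represented by its coefficient function k \<mapsto> w_k.\<close>
type_synonym om = "nat \<Rightarrow> fa"

definition om_carrier :: "om set" where
  "om_carrier = {\<omega>. \<forall>k. (k \<in> {1..4} \<longrightarrow> \<omega> k \<in> fa_carrier) \<and> (k \<notin> {1..4} \<longrightarrow> \<omega> k = 0)}"

definition om_eq :: "real \<Rightarrow> om \<Rightarrow> om \<Rightarrow> bool" where
  "om_eq \<theta> \<omega> \<eta> \<longleftrightarrow> (\<forall>k\<in>{1..4}. A_eq \<theta> (\<omega> k) (\<eta> k))"

definition om_lact :: "fa \<Rightarrow> om \<Rightarrow> om" where
  "om_lact a \<omega> = (\<lambda>k. a \<star> \<omega> k)"

definition om_ract :: "real \<Rightarrow> om \<Rightarrow> fa \<Rightarrow> om" where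
  "om_ract \<theta> \<omega> a = (\<lambda>k. \<omega> k \<star> sigma \<theta> k a)"

definition dz :: "nat \<Rightarrow> om" where
  "dz j = (\<lambda>k. if k = j then fa_const 1 else 0)"

text \<open>Omega^1_A \<otimes>_A Omega^1_A: free left A-module with basis dz^k \<otimes> dz^l,
represented by coefficient functions (k,l) \<mapsto> X_kl.\<close>
type_synonym tt = "nat \<Rightarrow> nat \<Rightarrow> fa"

definition tt_carrier :: "tt set" where
  "tt_carrier = {X. \<forall>k l. (k \<in> {1..4} \<and> l \<in> {1..4} \<longrightarrow> X k l \<in> fa_carrier)
                      \<and> (\<not> (k \<in> {1..4} \<and> l \<in> {1..4}) \<longrightarrow> X k l = 0)}"

definition tt_eq :: "real \<Rightarrow> tt \<Rightarrow> tt \<Rightarrow> bool" where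
  "tt_eq \<theta> X Y \<longleftrightarrow> (\<forall>k\<in>{1..4}. \<forall>l\<in>{1..4}. A_eq \<theta> (X k l) (Y k l))"

definition tt_lact :: "fa \<Rightarrow> tt \<Rightarrow> tt" where
  "tt_lact a X = (\<lambda>k l. a \<star> X k l)"

definition tt_ract :: "real \<Rightarrow> tt \<Rightarrow> fa \<Rightarrow> tt" where
  "tt_ract \<theta> X a = (\<lambda>k l. X k l \<star> sigma \<theta> k (sigma \<theta> l a))"

text \<open>omega \<otimes>_A eta = sum_{k,l} omega_k dz^k eta_l \<otimes> dz^l
  = sum_{k,l} omega_k sigma_k(eta_l) dz^k \<otimes> dz^l.\<close>
definition tens :: "real \<Rightarrow> om \<Rightarrow> om \<Rightarrow> tt" where
  "tens \<theta> \<omega> \<eta> = (\<lambda>k l. \<omega> k \<star> sigma \<theta> k (\<eta> l))"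

definition bimod_map_A_tt :: "real \<Rightarrow> (fa \<Rightarrow> tt) \<Rightarrow> bool" where
  "bimod_map_A_tt \<theta> f \<longleftrightarrow>
     (\<forall>a\<in>fa_carrier. f a \<in> tt_carrier)
   \<and> (\<forall>a\<in>fa_carrier. \<forall>b\<in>fa_carrier. A_eq \<theta> a b \<longrightarrow> tt_eq \<theta> (f a) (f b))
   \<and> (\<forall>a\<in>fa_carrier. \<forall>b\<in>fa_carrier. tt_eq \<theta> (f (a + b)) (f a + f b))
   \<and> (\<forall>c. \<forall>a\<in>fa_carrier. tt_eq \<theta> (f (fa_scal c a)) (\<lambda>k l. fa_scal c (f a k l)))
   \<and> (\<forall>a\<in>fa_carrier. \<forall>b\<in>fa_carrier. tt_eq \<theta> (f (a \<star> b)) (tt_lact a (f b)))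
   \<and> (\<forall>a\<in>fa_carrier. \<forall>b\<in>fa_carrier. tt_eq \<theta> (f (a \<star> b)) (tt_ract \<theta> (f a) b))"

definition bimod_map_tt_A :: "real \<Rightarrow> (tt \<Rightarrow> fa) \<Rightarrow> bool" where
  "bimod_map_tt_A \<theta> h \<longleftrightarrow>
     (\<forall>X\<in>tt_carrier. h X \<in> fa_carrier)
   \<and> (\<forall>X\<in>tt_carrier. \<forall>Y\<in>tt_carrier. tt_eq \<theta> X Y \<longrightarrow> A_eq \<theta> (h X) (h Y))
   \<and> (\<forall>X\<in>tt_carrier. \<forall>Y\<in>tt_carrier. A_eq \<theta> (h (X + Y)) (h X + h Y))
   \<and> (\<forall>c. \<forall>X\<in>tt_carrier. A_eq \<theta> (h (\<lambda>k l. fa_scal c (X k l))) (fa_scal c (h X)))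
   \<and> (\<forall>a\<in>fa_carrier. \<forall>X\<in>tt_carrier. A_eq \<theta> (h (tt_lact a X)) (a \<star> h X))
   \<and> (\<forall>a\<in>fa_carrier. \<forall>X\<in>tt_carrier. A_eq \<theta> (h (tt_ract \<theta> X a)) (h X \<star> a))"

definition Pmat :: "nat \<Rightarrow> nat \<Rightarrow> complex" where
  "Pmat i j = (if (i, j) \<in> {(1,3), (2,4), (3,1), (4,2)} then 1 else 0)"

definition g_low :: "nat \<Rightarrow> nat \<Rightarrow> complex" where
  "g_low i j = Pmat i j / 2"

definition g_up :: "nat \<Rightarrow> nat \<Rightarrow> complex" where
  "g_up i j = 2 * Pmat i j"

definition gmet :: tt where
  "gmet = (\<lambda>i j. if i \<in> {1..4} \<and> j \<in> {1..4} then fa_const (g_low i j) else 0)"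

text \<open>g^{-1} extended left A-linearly from g^{-1}(dz^i \<otimes> dz^j) = g^{ij}.\<close>
definition ginv :: "tt \<Rightarrow> fa" where
  "ginv X = (\<Sum>i\<in>{1..4}. \<Sum>j\<in>{1..4}. X i j \<star> fa_const (g_up i j))"

text \<open>Decomposition g(1) = sum_alpha g^alpha \<otimes> g_alpha with alpha = (i,j),
g^alpha = g_ij dz^i and g_alpha = dz^j.\<close>
definition gsup :: "nat \<times> nat \<Rightarrow> om" where
  "gsup \<alpha> = om_lact (fa_const (g_low (fst \<alpha>) (snd \<alpha>))) (dz (fst \<alpha>))"

definition gsub :: "nat \<times> nat \<Rightarrow> om" where
  "gsub \<alpha> = dz (snd \<alpha>)"

end

theory Submission
  imports Defs
begin

text \<open>
  Write \<open>dz\<^sup>k a = \<sigma>\<^sub>k(a) dz\<^sup>k\<close>, where \<open>\<sigma>\<^sub>k\<close> multiplies a word by the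
  product of the entries \<open>R\<^sup>m\<^sup>k\<close> over its letters \<open>m\<close>. The coefficient matrices of \<open>g\<close>
  and \<open>g\<^sup>-\<^sup>1\<close> are supported on the pairs \<open>(k, k \<plusminus> 2)\<close>, and columns \<open>k\<close> and \<open>k \<plusminus> 2\<close>
  of \<open>R\<close> are complex conjugate, so \<open>\<sigma>\<^sub>k \<sigma>\<^sub>l = id\<close> on every pair that occurs. Hence
  the constant tensor \<open>g\<close> is central, and \<open>a \<mapsto> a g\<close> and \<open>g\<^sup>-\<^sup>1\<close> respect the right
  action. Once the twists cancel, both inverse identities reduce to the matrix identity
  \<open>(P/2)(2P) = P\<^sup>2 = 1\<close>.
\<close>

lemma sum_fun_apply: "(\<Sum>i\<in>I. f i) x = (\<Sum>i\<in>I. f i x)"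
  by (induct I rule: infinite_finite_induct) auto

lemma sum_if_zero: "(\<Sum>x\<in>A. if P then f x else 0) = (if P then \<Sum>x\<in>A. f x else 0)"
  by simp

lemma fa_scal_0_left [simp]: "fa_scal 0 a = 0"
  and fa_scal_0_right [simp]: "fa_scal c 0 = 0"
  and fa_scal_1 [simp]: "fa_scal 1 a = a"
  by (auto simp: fa_scal_def)

lemma fa_scal_add: "fa_scal c (a + b) = fa_scal c a + fa_scal c b"
  and fa_scal_diff: "fa_scal c (a - b) = fa_scal c a - fa_scal c b"
  and fa_scal_scal: "fa_scal c (fa_scal d a) = fa_scal (c * d) a"
  and fa_scal_const: "fa_scal c (fa_const d) = fa_const (c * d)"
  by (auto simp: fa_scal_def fa_const_def algebra_simps)

lemma fa_scal_sum: "fa_scal c (\<Sum>i\<in>I. f i) = (\<Sum>i\<in>I. fa_scal c (f i))"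
  by (rule ext) (simp add: fa_scal_def sum_fun_apply sum_distrib_left)

lemma fa_scal_sum_left: "fa_scal (\<Sum>i\<in>I. c i) a = (\<Sum>i\<in>I. fa_scal (c i) a)"
  by (rule ext) (simp add: fa_scal_def sum_fun_apply sum_distrib_right)

lemma fa_scal_if_zero: "fa_scal c (if P then a else 0) = (if P then fa_scal c a else 0)"
  by simp

lemma fa_mult_0_left [simp]: "0 \<star> a = 0"
  and fa_mult_0_right [simp]: "a \<star> 0 = 0"
  by (auto simp: fa_mult_def)

lemma fa_mult_scal_left: "fa_scal c a \<star> b = fa_scal c (a \<star> b)"
  and fa_mult_scal_right: "a \<star> fa_scal c b = fa_scal c (a \<star> b)"
  by (auto simp: fa_mult_def fa_scal_def algebra_simps sum.distrib sum_distrib_left)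

lemma fa_mult_sum_left: "(\<Sum>i\<in>I. f i) \<star> b = (\<Sum>i\<in>I. f i \<star> b)"
  by (rule ext) (simp add: fa_mult_def sum_fun_apply sum_distrib_right sum.swap[of _ I])

lemma fa_mult_sum_right: "b \<star> (\<Sum>i\<in>I. f i) = (\<Sum>i\<in>I. b \<star> f i)"
  by (rule ext) (simp add: fa_mult_def sum_fun_apply sum_distrib_left sum.swap[of _ I])

lemma fa_mult_const_right: "a \<star> fa_const c = fa_scal c a"
proof (rule ext)
  fix w
  have "(\<Sum>k\<le>length w. a (take k w) * fa_const c (drop k w))
      = (\<Sum>k\<le>length w. if k = length w then a w * c else 0)"
    by (rule sum.cong) (auto simp: fa_const_def)
  then show "(a \<star> fa_const c) w = fa_scal c a w"
    by (simp add: fa_mult_def fa_scal_def)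
qed

lemma fa_mult_const_left: "fa_const c \<star> a = fa_scal c a"
proof (rule ext)
  fix w
  have "(\<Sum>k\<le>length w. fa_const c (take k w) * a (drop k w))
      = (\<Sum>k\<le>length w. if k = 0 then c * a w else 0)"
    by (rule sum.cong) (auto simp: fa_const_def)
  then show "(fa_const c \<star> a) w = fa_scal c a w"
    by (simp add: fa_mult_def fa_scal_def)
qed

lemma fa_carrier_zero: "0 \<in> fa_carrier"
  by (simp add: fa_carrier_def)

lemma fa_carrier_const: "fa_const c \<in> fa_carrier"
proof -
  have "{w. fa_const c w \<noteq> 0} \<subseteq> {[]}"
    by (auto simp: fa_const_def)
  then show ?thesis
    by (auto simp: fa_carrier_def fa_const_def finite_subset)
qed

lemma fa_carrier_scal: "a \<in> fa_carrier \<Longrightarrow> fa_scal c a \<in> fa_carrier"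
  by (auto simp: fa_carrier_def fa_scal_def elim: rev_finite_subset)

lemma fa_carrier_add:
  assumes "a \<in> fa_carrier" and "b \<in> fa_carrier"
  shows "a + b \<in> fa_carrier"
proof -
  have "{w. (a + b) w \<noteq> 0} \<subseteq> {w. a w \<noteq> 0} \<union> {w. b w \<noteq> 0}"
    by auto
  with assms show ?thesis
    unfolding fa_carrier_def by (auto intro: finite_subset)
qed

lemma fa_carrier_sum: "(\<And>i. i \<in> I \<Longrightarrow> f i \<in> fa_carrier) \<Longrightarrow> (\<Sum>i\<in>I. f i) \<in> fa_carrier"
  by (induct I rule: infinite_finite_induct) (auto simp: fa_carrier_zero fa_carrier_add)

lemma fa_ideal_scal: "x \<in> fa_ideal \<theta> \<Longrightarrow> fa_scal c x \<in> fa_ideal \<theta>"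
proof (induct rule: fa_ideal.induct)
  case zero
  show ?case by (simp only: fa_scal_0_right fa_ideal.zero)
next
  case (gen i j u v)
  then have "fa_scal c u \<star> rel \<theta> i j \<star> v \<in> fa_ideal \<theta>"
    by (simp add: fa_ideal.gen fa_carrier_scal)
  then show ?case
    by (simp add: fa_mult_scal_left)
next
  case (add x y)
  then show ?case by (simp only: fa_scal_add fa_ideal.add)
qed

lemma fa_ideal_sum: "(\<And>i. i \<in> I \<Longrightarrow> f i \<in> fa_ideal \<theta>) \<Longrightarrow> (\<Sum>i\<in>I. f i) \<in> fa_ideal \<theta>"
  by (induct I rule: infinite_finite_induct) (auto simp: fa_ideal.zero fa_ideal.add)

lemma A_eqI: "a = b \<Longrightarrow> A_eq \<theta> a b"
  by (simp add: A_eq_def fa_ideal.zero)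

lemma tt_eqI: "(\<And>k l. k \<in> {1..4} \<Longrightarrow> l \<in> {1..4} \<Longrightarrow> X k l = Y k l) \<Longrightarrow> tt_eq \<theta> X Y"
  by (simp add: tt_eq_def A_eqI)

lemma om_eqI: "(\<And>k. k \<in> {1..4} \<Longrightarrow> X k = Y k) \<Longrightarrow> om_eq \<theta> X Y"
  by (simp add: om_eq_def A_eqI)

lemma sigma_const: "sigma \<theta> k (fa_const c) = fa_const c"
  by (auto simp: sigma_def fa_const_def)

lemma sigma_zero [simp]: "sigma \<theta> k 0 = 0"
  by (auto simp: sigma_def)

lemma sigma_scal: "sigma \<theta> k (fa_scal c a) = fa_scal c (sigma \<theta> k a)"
  by (auto simp: sigma_def fa_scal_def algebra_simps)

lemma sigma_sum: "sigma \<theta> k (\<Sum>i\<in>I. f i) = (\<Sum>i\<in>I. sigma \<theta> k (f i))"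
  by (rule ext) (simp add: sigma_def sum_fun_apply sum_distrib_left)

lemma sigma_sigma_cancel:
  assumes a: "a \<in> fa_carrier"
    and R: "\<And>m. m \<in> {1..4} \<Longrightarrow> Rmat \<theta> m k * Rmat \<theta> m l = 1"
  shows "sigma \<theta> k (sigma \<theta> l a) = a"
proof (rule ext)
  fix w
  have "set w \<subseteq> {1..4} \<Longrightarrow>
      prod_list (map (\<lambda>m. Rmat \<theta> m k) w) * prod_list (map (\<lambda>m. Rmat \<theta> m l) w) = 1"
    by (induct w) (auto simp: R algebra_simps)
  moreover have "a w \<noteq> 0 \<Longrightarrow> set w \<subseteq> {1..4}"
    using a by (auto simp: fa_carrier_def)
  ultimately show "sigma \<theta> k (sigma \<theta> l a) w = a w"
    by (cases "a w = 0") (auto simp: sigma_def mult.assoc[symmetric])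
qed

lemma Rmat_Pmat_pair:
  assumes "m \<in> {1..4}" and "Pmat k l \<noteq> 0"
  shows "Rmat \<theta> m k * Rmat \<theta> m l = 1"
proof -
  have "(k, l) \<in> {(1,3), (2,4), (3,1), (4,2)}"
    using assms(2) by (auto simp: Pmat_def split: if_splits)
  moreover have "m \<in> {1, 2, 3, 4}"
    using assms(1) by auto
  ultimately show ?thesis
    by (auto simp: Rmat_def cis_mult)
qed

lemma fa_scal_sigma_sigma_Pmat:
  assumes "a \<in> fa_carrier" and "c \<noteq> 0 \<Longrightarrow> Pmat k l \<noteq> 0"
  shows "fa_scal c (sigma \<theta> k (sigma \<theta> l a)) = fa_scal c a"
proof (cases "c = 0")
  case False
  then have "Pmat k l \<noteq> 0"
    using assms(2) by blast
  then have "sigma \<theta> k (sigma \<theta> l a) = a"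
    using assms(1) Rmat_Pmat_pair sigma_sigma_cancel by blast
  then show ?thesis by simp
qed simp

lemma Pmat_square:
  assumes "i \<in> {1..4}" and "k \<in> {1..4}"
  shows "(\<Sum>j\<in>{1..4}. Pmat i j * Pmat j k) = (if i = k then 1 else 0)"
proof -
  have four: "{1..4::nat} = {1, 2, 3, 4}" by auto
  from assms show ?thesis
    unfolding four by (auto simp: Pmat_def)
qed

lemma g_up_g_low_inverse:
  assumes "i \<in> {1..4}" and "k \<in> {1..4}"
  shows "(\<Sum>j\<in>{1..4}. g_up i j * g_low j k) = (if i = k then 1 else 0)"
proof -
  have "g_up i j * g_low j k = Pmat i j * Pmat j k" for j
    by (simp add: g_up_def g_low_def)
  with Pmat_square[OF assms] show ?thesis by simp
qed

lemma g_low_g_up_inverse: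
  assumes "i \<in> {1..4}" and "k \<in> {1..4}"
  shows "(\<Sum>j\<in>{1..4}. g_low i j * g_up j k) = (if i = k then 1 else 0)"
proof -
  have "g_low i j * g_up j k = Pmat i j * Pmat j k" for j
    by (simp add: g_up_def g_low_def)
  with Pmat_square[OF assms] show ?thesis by simp
qed

lemma gmet_in_tt_carrier: "gmet \<in> tt_carrier"
  by (auto simp: tt_carrier_def gmet_def fa_carrier_const)

lemma tt_lact_gmet:
  "tt_lact a gmet = (\<lambda>k l. if k \<in> {1..4} \<and> l \<in> {1..4} then fa_scal (g_low k l) a else 0)"
  by (intro ext) (simp add: tt_lact_def gmet_def fa_mult_const_right)

lemma fa_scal_g_low_sigma_sigma:
  "a \<in> fa_carrier \<Longrightarrow> fa_scal (g_low k l) (sigma \<theta> k (sigma \<theta> l a)) = fa_scal (g_low k l) a"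
  by (rule fa_scal_sigma_sigma_Pmat) (simp_all add: g_low_def)

lemma gmet_central:
  assumes "a \<in> fa_carrier"
  shows "tt_eq \<theta> (tt_lact a gmet) (tt_ract \<theta> gmet a)"
proof (rule tt_eqI)
  fix k l :: nat
  assume "k \<in> {1..4}" and "l \<in> {1..4}"
  then show "tt_lact a gmet k l = tt_ract \<theta> gmet a k l"
    using fa_scal_g_low_sigma_sigma[OF assms]
    by (simp add: tt_lact_def tt_ract_def gmet_def fa_mult_const_left fa_mult_const_right)
qed

lemma bimod_map_A_tt_lact_gmet: "bimod_map_A_tt \<theta> (\<lambda>a. tt_lact a gmet)"
proof -
  define G where "G a = (\<lambda>k l. if k \<in> {1..4} \<and> l \<in> {1..4} then fa_scal (g_low k l) a else 0)"
    for a
  have G_apply: "G a k l = fa_scal (g_low k l) a" if "k \<in> {1..4}" and "l \<in> {1..4}" for a k l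
    using that by (simp add: G_def)
  have "bimod_map_A_tt \<theta> G"
    unfolding bimod_map_A_tt_def
  proof (intro conjI ballI allI impI)
    fix a assume "a \<in> fa_carrier"
    then show "G a \<in> tt_carrier"
      by (auto simp: G_def tt_carrier_def fa_carrier_scal)
  next
    fix a b assume "A_eq \<theta> a b"
    then show "tt_eq \<theta> (G a) (G b)"
      by (simp add: tt_eq_def A_eq_def G_apply fa_ideal_scal flip: fa_scal_diff)
  next
    fix a b show "tt_eq \<theta> (G (a + b)) (G a + G b)"
      by (rule tt_eqI) (simp add: G_apply fa_scal_add)
  next
    fix c a show "tt_eq \<theta> (G (fa_scal c a)) (\<lambda>k l. fa_scal c (G a k l))"
      by (rule tt_eqI) (simp add: G_apply fa_scal_scal mult.commute)
  next
    fix a b show "tt_eq \<theta> (G (a \<star> b)) (tt_lact a (G b))"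
      by (rule tt_eqI) (simp add: G_apply tt_lact_def fa_mult_scal_right)
  next
    fix a b assume "b \<in> fa_carrier"
    then show "tt_eq \<theta> (G (a \<star> b)) (tt_ract \<theta> (G a) b)"
      using fa_scal_g_low_sigma_sigma
      by (intro tt_eqI) (simp add: G_apply tt_ract_def fa_mult_scal_left flip: fa_mult_scal_right)
  qed
  moreover have "(\<lambda>a. tt_lact a gmet) = G"
    by (simp add: fun_eq_iff G_def tt_lact_gmet)
  ultimately show ?thesis
    by simp
qed

lemma ginv_eq: "ginv X = (\<Sum>i\<in>{1..4}. \<Sum>j\<in>{1..4}. fa_scal (g_up i j) (X i j))"
  by (simp add: ginv_def fa_mult_const_right)

lemma bimod_map_tt_A_ginv: "bimod_map_tt_A \<theta> ginv"
  unfolding bimod_map_tt_A_def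
proof (intro conjI ballI allI impI)
  fix X assume "X \<in> tt_carrier"
  then show "ginv X \<in> fa_carrier"
    by (auto simp: ginv_eq tt_carrier_def intro!: fa_carrier_sum fa_carrier_scal)
next
  fix X Y assume "tt_eq \<theta> X Y"
  then have "(\<Sum>i\<in>{1..4}. \<Sum>j\<in>{1..4}. fa_scal (g_up i j) (X i j - Y i j)) \<in> fa_ideal \<theta>"
    by (intro fa_ideal_sum fa_ideal_scal) (simp add: tt_eq_def A_eq_def)
  then show "A_eq \<theta> (ginv X) (ginv Y)"
    by (simp add: A_eq_def ginv_eq fa_scal_diff sum_subtractf)
next
  fix X Y show "A_eq \<theta> (ginv (X + Y)) (ginv X + ginv Y)"
    by (rule A_eqI) (simp add: ginv_eq fa_scal_add sum.distrib)
next
  fix c X show "A_eq \<theta> (ginv (\<lambda>k l. fa_scal c (X k l))) (fa_scal c (ginv X))"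
    by (rule A_eqI) (simp add: ginv_eq fa_scal_sum fa_scal_scal mult.commute)
next
  fix a X show "A_eq \<theta> (ginv (tt_lact a X)) (a \<star> ginv X)"
    by (rule A_eqI) (simp add: ginv_eq tt_lact_def fa_mult_sum_right fa_mult_scal_right)
next
  fix a X assume a: "a \<in> fa_carrier"
  have "fa_scal (g_up i j) (sigma \<theta> i (sigma \<theta> j a)) = fa_scal (g_up i j) a" for i j
    using a by (rule fa_scal_sigma_sigma_Pmat) (simp add: g_up_def)
  then show "A_eq \<theta> (ginv (tt_ract \<theta> X a)) (ginv X \<star> a)"
    by (intro A_eqI) (simp add: ginv_eq tt_ract_def fa_mult_sum_left fa_mult_scal_left
        flip: fa_mult_scal_right)
qed

lemma gsup_eq: "gsup (i, j) = (\<lambda>k. if k = i then fa_const (g_low i j) else 0)"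
  by (rule ext) (simp add: gsup_def om_lact_def dz_def fa_mult_const_right fa_scal_const)

lemma gsub_eq: "gsub (i, j) = dz j"
  by (simp add: gsub_def)

lemma tens_gsup_gsub:
  "tens \<theta> (gsup \<alpha>) (gsub \<alpha>) k l = (if \<alpha> = (k, l) then fa_const (g_low k l) else 0)"
  by (cases \<alpha>) (auto simp: tens_def gsup_eq gsub_eq dz_def sigma_const fa_mult_const_right fa_scal_const)

lemma gmet_decomposition: "tt_eq \<theta> (\<Sum>\<alpha>\<in>{1..4}\<times>{1..4}. tens \<theta> (gsup \<alpha>) (gsub \<alpha>)) gmet"
  by (rule tt_eqI) (simp add: sum_fun_apply tens_gsup_gsub gmet_def)

lemma om_lact_dz: "om_lact b (dz j) = (\<lambda>m. if m = j then b else 0)"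
  by (rule ext) (simp add: om_lact_def dz_def fa_mult_const_right)

lemma ginv_tens_gsup:
  assumes "i \<in> {1..4}"
  shows "ginv (tens \<theta> \<omega> (gsup (i, j))) = (\<Sum>k\<in>{1..4}. fa_scal (g_up k i * g_low i j) (\<omega> k))"
proof -
  have "tens \<theta> \<omega> (gsup (i, j)) = (\<lambda>k l. if l = i then fa_scal (g_low i j) (\<omega> k) else 0)"
    by (intro ext) (simp add: tens_def gsup_eq sigma_const fa_mult_const_right)
  with assms show ?thesis
    by (simp add: ginv_eq fa_scal_if_zero fa_scal_scal)
qed

lemma ginv_left_inverse:
  "om_eq \<theta> (\<Sum>\<alpha>\<in>{1..4}\<times>{1..4}. om_lact (ginv (tens \<theta> \<omega> (gsup \<alpha>))) (gsub \<alpha>)) \<omega>"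
proof (rule om_eqI)
  fix m :: nat
  assume m: "m \<in> {1..4}"
  have "(\<Sum>\<alpha>\<in>{1..4}\<times>{1..4}. om_lact (ginv (tens \<theta> \<omega> (gsup \<alpha>))) (gsub \<alpha>)) m
      = (\<Sum>i\<in>{1..4}. ginv (tens \<theta> \<omega> (gsup (i, m))))"
    using m by (simp add: sum_fun_apply sum.cartesian_product' gsub_eq om_lact_dz)
  also have "\<dots> = (\<Sum>i\<in>{1..4}. \<Sum>k\<in>{1..4}. fa_scal (g_up k i * g_low i m) (\<omega> k))"
    by (rule sum.cong) (simp_all add: ginv_tens_gsup)
  also have "\<dots> = (\<Sum>k\<in>{1..4}. fa_scal (\<Sum>i\<in>{1..4}. g_up k i * g_low i m) (\<omega> k))"
    by (simp add: fa_scal_sum_left) (rule sum.swap)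
  also have "\<dots> = (\<Sum>k\<in>{1..4}. if k = m then \<omega> k else 0)"
  proof (rule sum.cong)
    fix k :: nat
    assume "k \<in> {1..4}"
    then show "fa_scal (\<Sum>i\<in>{1..4}. g_up k i * g_low i m) (\<omega> k) = (if k = m then \<omega> k else 0)"
      by (simp only: g_up_g_low_inverse[OF _ m]) simp
  qed simp
  also have "\<dots> = \<omega> m"
    using m by simp
  finally show "(\<Sum>\<alpha>\<in>{1..4}\<times>{1..4}. om_lact (ginv (tens \<theta> \<omega> (gsup \<alpha>))) (gsub \<alpha>)) m = \<omega> m" .
qed

lemma om_ract_gsup:
  "om_ract \<theta> (gsup (i, j)) b = (\<lambda>m. if m = i then fa_scal (g_low i j) (sigma \<theta> i b) else 0)"
  by (rule ext) (simp add: om_ract_def gsup_eq fa_mult_const_left)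

lemma ginv_tens_gsub:
  assumes "j \<in> {1..4}"
  shows "ginv (tens \<theta> (gsub (i, j)) \<omega>) = (\<Sum>l\<in>{1..4}. fa_scal (g_up j l) (sigma \<theta> j (\<omega> l)))"
proof -
  have "tens \<theta> (gsub (i, j)) \<omega> = (\<lambda>k l. if k = j then sigma \<theta> j (\<omega> l) else 0)"
    by (intro ext) (simp add: tens_def gsub_eq dz_def fa_mult_const_left)
  with assms show ?thesis
    by (simp add: ginv_eq fa_scal_if_zero sum_if_zero)
qed

lemma ginv_right_inverse:
  assumes "\<omega> \<in> om_carrier"
  shows "om_eq \<theta> (\<Sum>\<alpha>\<in>{1..4}\<times>{1..4}. om_ract \<theta> (gsup \<alpha>) (ginv (tens \<theta> (gsub \<alpha>) \<omega>))) \<omega>"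
proof (rule om_eqI)
  fix m :: nat
  assume m: "m \<in> {1..4}"
  have "(\<Sum>\<alpha>\<in>{1..4}\<times>{1..4}. om_ract \<theta> (gsup \<alpha>) (ginv (tens \<theta> (gsub \<alpha>) \<omega>))) m
      = (\<Sum>j\<in>{1..4}. fa_scal (g_low m j) (sigma \<theta> m (ginv (tens \<theta> (gsub (m, j)) \<omega>))))"
    using m by (simp add: sum_fun_apply sum.cartesian_product' om_ract_gsup sum_if_zero)
  also have "\<dots> = (\<Sum>j\<in>{1..4}. \<Sum>l\<in>{1..4}.
      fa_scal (g_low m j * g_up j l) (sigma \<theta> m (sigma \<theta> j (\<omega> l))))"
    by (rule sum.cong) (simp_all add: ginv_tens_gsub sigma_sum sigma_scal fa_scal_sum fa_scal_scal)
  also have "\<dots> = (\<Sum>j\<in>{1..4}. \<Sum>l\<in>{1..4}. fa_scal (g_low m j * g_up j l) (\<omega> l))"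
  proof (intro sum.cong refl fa_scal_sigma_sigma_Pmat)
    fix l :: nat
    assume "l \<in> {1..4}"
    with assms show "\<omega> l \<in> fa_carrier"
      by (simp add: om_carrier_def)
  next
    fix j l :: nat
    assume "g_low m j * g_up j l \<noteq> 0"
    then show "Pmat m j \<noteq> 0"
      by (simp add: g_low_def)
  qed
  also have "\<dots> = (\<Sum>l\<in>{1..4}. fa_scal (\<Sum>j\<in>{1..4}. g_low m j * g_up j l) (\<omega> l))"
    by (simp add: fa_scal_sum_left) (rule sum.swap)
  also have "\<dots> = (\<Sum>l\<in>{1..4}. if l = m then \<omega> l else 0)"
  proof (rule sum.cong)
    fix l :: nat
    assume "l \<in> {1..4}"
    then show "fa_scal (\<Sum>j\<in>{1..4}. g_low m j * g_up j l) (\<omega> l) = (if l = m then \<omega> l else 0)"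
      by (simp only: g_low_g_up_inverse[OF m]) simp
  qed simp
  also have "\<dots> = \<omega> m"
    using m by simp
  finally show "(\<Sum>\<alpha>\<in>{1..4}\<times>{1..4}. om_ract \<theta> (gsup \<alpha>) (ginv (tens \<theta> (gsub \<alpha>) \<omega>))) m = \<omega> m" .
qed

theorem lemma4p2:
  fixes \<theta> :: real
  shows "gmet \<in> tt_carrier
    \<and> (\<forall>a\<in>fa_carrier. tt_eq \<theta> (tt_lact a gmet) (tt_ract \<theta> gmet a))
    \<and> bimod_map_A_tt \<theta> (\<lambda>a. tt_lact a gmet)
    \<and> tt_eq \<theta> (\<Sum>\<alpha>\<in>{1..4}\<times>{1..4}. tens \<theta> (gsup \<alpha>) (gsub \<alpha>)) gmet
    \<and> bimod_map_tt_A \<theta> ginv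
    \<and> (\<forall>\<omega>\<in>om_carrier.
         om_eq \<theta> (\<Sum>\<alpha>\<in>{1..4}\<times>{1..4}. om_lact (ginv (tens \<theta> \<omega> (gsup \<alpha>))) (gsub \<alpha>)) \<omega>)
    \<and> (\<forall>\<omega>\<in>om_carrier.
         om_eq \<theta> (\<Sum>\<alpha>\<in>{1..4}\<times>{1..4}. om_ract \<theta> (gsup \<alpha>) (ginv (tens \<theta> (gsub \<alpha>) \<omega>))) \<omega>)"
  using gmet_in_tt_carrier gmet_central bimod_map_A_tt_lact_gmet gmet_decomposition
    bimod_map_tt_A_ginv ginv_left_inverse ginv_right_inverse
  by blast

end
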